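(* Let $X=(x_1,\ldots,x_L,x_1,\ldots,x_L,\ldots)$ be a periodic sequence of positive reals with period $L$. Assume that for every $c\in[0,1]$ the limit $F_X(c):=\lim_{k\to\infty}F_X(k,c)$ exists and that $c\mapsto F_X(c)$ is continuous on $[0,1]$. Then $F_X(k,c)\to F_X(c)$ uniformly in $c\in[0,1]$ as $k\to\infty$.
   Context: For a sequence $X$ of positive reals and integers $1\le k\le n$, $S(X,n,k):=\binom{n}{k}^{-1}\sum_{1\le i_1<\cdots<i_k\le n}x_{i_1}\cdots x_{i_k}$. For $k\ge1$ and $c\in(0,1]$ set $F_X(k,c):=S(X,kL,\lceil ckL\rceil)^{1/\lceil ckL\rceil}$, and set $F_X(k,0):=(x_1+\cdots+x_L)/L$. *)

theory Defs
  imports "HOL-Analysis.Analysis"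
begin

text \<open>The sequence X = (x_1, x_2, ...) is represented 0-indexed: X 0 = x_1, X 1 = x_2, ...\<close>

definition S :: "(nat \<Rightarrow> real) \<Rightarrow> nat \<Rightarrow> nat \<Rightarrow> real" where
  "S X n k = (\<Sum>A\<in>{A. A \<subseteq> {..<n} \<and> card A = k}. \<Prod>i\<in>A. X i) / real (n choose k)"

definition F :: "(nat \<Rightarrow> real) \<Rightarrow> nat \<Rightarrow> nat \<Rightarrow> real \<Rightarrow> real" where
  "F X L k c = (if c = 0 then (\<Sum>i<L. X i) / real L
     else (let m = nat \<lceil>c * real (k * L)\<rceil> in root m (S X (k * L) m)))"

end

theory Submission
  imports Defs
begin

text \<open>For fixed k the map c \<mapsto> F_X(k, c) is nonincreasing on [0, \<infinity>). For c > 0 it equals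
  S_m^(1/m) with m = \<lceil>ckL\<rceil> nondecreasing in c, and m \<mapsto> S_m^(1/m) is nonincreasing by
  Maclaurin's inequality, a consequence of Newton's inequality S_(m-1) S_(m+1) \<le> S_m^2, which is
  proved by induction on the number of variables. At c = 0, periodicity makes F_X(k, 0) the
  arithmetic mean S_1. Monotone functions converging pointwise to a continuous limit on a compact
  interval converge uniformly (P\'olya): compare them with the limit on a grid finer than the
  modulus of continuity.\<close>

section \<open>Elementary symmetric means\<close>

definition esym :: "(nat \<Rightarrow> real) \<Rightarrow> nat \<Rightarrow> nat \<Rightarrow> real" where
  "esym X n k = (\<Sum>A\<in>{A. A \<subseteq> {..<n} \<and> card A = k}. \<Prod>i\<in>A. X i)"

lemma finite_subsets_card: "finite {A. A \<subseteq> {..<n::nat} \<and> card A = k}"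
  by (rule finite_subset[of _ "Pow {..<n}"]) auto

lemma subsets_card_Suc_split:
  "{A. A \<subseteq> {..<Suc n} \<and> card A = Suc k} =
   {A. A \<subseteq> {..<n} \<and> card A = Suc k} \<union> insert n ` {A. A \<subseteq> {..<n} \<and> card A = k}"
proof (intro equalityI subsetI)
  fix A assume A: "A \<in> {A. A \<subseteq> {..<Suc n} \<and> card A = Suc k}"
  then have "finite A" using finite_subset by blast
  show "A \<in> {A. A \<subseteq> {..<n} \<and> card A = Suc k} \<union> insert n ` {A. A \<subseteq> {..<n} \<and> card A = k}"
  proof (cases "n \<in> A")
    case True
    then have "A = insert n (A - {n})" "A - {n} \<subseteq> {..<n}" "card (A - {n}) = k"
      using A \<open>finite A\<close> by auto
    then show ?thesis by (intro UnI2 image_eqI[where x = "A - {n}"]) auto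
  next
    case False
    then show ?thesis using A by (auto simp: less_Suc_eq)
  qed
next
  fix A assume "A \<in> {A. A \<subseteq> {..<n} \<and> card A = Suc k} \<union> insert n ` {A. A \<subseteq> {..<n} \<and> card A = k}"
  then show "A \<in> {A. A \<subseteq> {..<Suc n} \<and> card A = Suc k}"
  proof
    assume "A \<in> insert n ` {A. A \<subseteq> {..<n} \<and> card A = k}"
    then obtain B where "B \<subseteq> {..<n}" "card B = k" "A = insert n B" by blast
    moreover have "finite B" "n \<notin> B" using \<open>B \<subseteq> {..<n}\<close> finite_subset by auto
    ultimately show ?thesis by auto
  qed auto
qed

lemma esym_Suc_Suc: "esym X (Suc n) (Suc k) = esym X n (Suc k) + X n * esym X n k"
proof -
  let ?A = "{A. A \<subseteq> {..<n} \<and> card A = k}"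
  have inj: "inj_on (insert n) ?A"
    by (rule inj_onI) (metis insert_ident lessThan_iff less_irrefl mem_Collect_eq subsetD)
  have "esym X (Suc n) (Suc k) = esym X n (Suc k) + (\<Sum>A\<in>insert n ` ?A. \<Prod>i\<in>A. X i)"
    unfolding esym_def subsets_card_Suc_split
    by (rule sum.union_disjoint) (auto simp: finite_subsets_card)
  also have "(\<Sum>A\<in>insert n ` ?A. \<Prod>i\<in>A. X i) = (\<Sum>A\<in>?A. X n * (\<Prod>i\<in>A. X i))"
  proof (subst sum.reindex[OF inj], intro sum.cong refl)
    fix A assume "A \<in> ?A"
    then have "finite A" "n \<notin> A" using finite_subset by auto
    then show "((\<lambda>A. \<Prod>i\<in>A. X i) \<circ> insert n) A = X n * (\<Prod>i\<in>A. X i)" by simp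
  qed
  finally show ?thesis by (simp add: esym_def sum_distrib_left)
qed

lemma esym_eq_0:
  assumes "n < k" shows "esym X n k = 0"
proof -
  have empty: "{A. A \<subseteq> {..<n} \<and> card A = k} = {}"
    using assms by (auto dest!: card_mono[OF finite_lessThan])
  show ?thesis unfolding esym_def empty by simp
qed

lemma S_eq_esym_div: "S X n k = esym X n k / real (n choose k)"
  by (simp add: S_def esym_def)

lemma esym_eq_S: "esym X n k = real (n choose k) * S X n k"
  by (cases "k \<le> n") (simp_all add: S_eq_esym_div esym_eq_0)

lemma S_eq_0: "n < k \<Longrightarrow> S X n k = 0"
  by (simp add: S_eq_esym_div esym_eq_0)

lemma S_0 [simp]: "S X n 0 = 1"
proof -
  have "{A. A \<subseteq> {..<n} \<and> card A = 0} = {{}}"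
    using finite_subset[of _ "{..<n}"] by auto
  then show ?thesis by (simp add: S_def)
qed

lemma S_1: "S X n 1 = (\<Sum>i<n. X i) / real n"
proof -
  have "{A. A \<subseteq> {..<n} \<and> card A = 1} = (\<lambda>i. {i}) ` {..<n}"
    by (auto simp: card_Suc_eq)
  then show ?thesis by (simp add: S_def sum.reindex inj_on_def)
qed

lemma S_nonneg: "(\<And>i. X i \<ge> 0) \<Longrightarrow> S X n k \<ge> 0"
  unfolding S_def by (intro divide_nonneg_nonneg sum_nonneg prod_nonneg) auto

lemma S_pos:
  assumes "\<And>i. X i > 0" "k \<le> n"
  shows "S X n k > 0"
proof -
  have "{..<k} \<in> {A. A \<subseteq> {..<n} \<and> card A = k}" using assms(2) by auto
  then have "esym X n k > 0" unfolding esym_def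
    by (intro sum_pos finite_subsets_card prod_pos assms(1)) blast+
  with assms(2) show ?thesis by (simp add: S_eq_esym_div)
qed

lemma S_Suc:
  "(real n + 1) * S X (Suc n) k = (real n + 1 - real k) * S X n k + real k * X n * S X n (k - 1)"
proof (cases k)
  case (Suc j)
  show ?thesis
  proof (cases "j \<le> n")
    case False
    then show ?thesis using Suc by (simp add: S_eq_0)
  next
    case True
    have c1: "(real j + 1) * real (Suc n choose Suc j) = (real n + 1) * real (n choose j)"
      by (metis Suc_times_binomial of_nat_Suc of_nat_mult add.commute)
    have "real (Suc n - Suc j) * real (Suc n choose Suc j) = real (Suc n) * real (n choose Suc j)"
      by (metis binomial_absorb_comp diff_Suc_1 of_nat_mult)
    then have c2: "(real n - real j) * real (Suc n choose Suc j) = (real n + 1) * real (n choose Suc j)"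
      using True by (simp add: of_nat_diff)
    let ?C = "real (Suc n choose Suc j)"
    have "?C * ((real n + 1) * S X (Suc n) (Suc j)) = (real n + 1) * esym X (Suc n) (Suc j)"
      by (simp add: esym_eq_S del: binomial_Suc_Suc)
    also have "\<dots> = (real n + 1) * real (n choose Suc j) * S X n (Suc j)
        + (real n + 1) * real (n choose j) * X n * S X n j"
      unfolding esym_Suc_Suc unfolding esym_eq_S by (simp add: algebra_simps)
    also have "\<dots> = ?C * ((real n - real j) * S X n (Suc j) + (real j + 1) * X n * S X n j)"
      unfolding c1[symmetric] c2[symmetric] by (simp add: algebra_simps)
    finally have "?C * ((real n + 1) * S X (Suc n) (Suc j))
        = ?C * ((real n - real j) * S X n (Suc j) + (real j + 1) * X n * S X n j)" .
    moreover have "?C \<noteq> 0" using True by (simp del: binomial_Suc_Suc)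
    ultimately show ?thesis using Suc by (simp add: add.commute)
  qed
qed simp

section \<open>Newton and Maclaurin inequalities\<close>

lemma newton_step_inequality:
  fixes a b c d y p q :: real
  assumes "0 \<le> a" "0 \<le> b" "0 \<le> c" "0 \<le> d" "0 \<le> y" "1 \<le> p" "1 \<le> q"
    and "a * c \<le> b\<^sup>2" "b * d \<le> c\<^sup>2" "0 < b * c"
  shows "((p + 1) * b + (q - 1) * y * a) * ((p - 1) * d + (q + 1) * y * c) \<le> (p * c + q * y * b)\<^sup>2"
proof -
  have "(a * d) * (b * c) = (a * c) * (b * d)" by (simp add: algebra_simps)
  also have "\<dots> \<le> b\<^sup>2 * c\<^sup>2" using assms by (intro mult_mono) auto
  also have "\<dots> = (b * c) * (b * c)" by (simp add: power2_eq_square)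
  finally have "a * d \<le> b * c" using \<open>0 < b * c\<close> by (rule mult_right_le_imp_le)
  \<comment> \<open>every summand on the right is nonnegative\<close>
  moreover have "(p * c + q * y * b)\<^sup>2 - ((p + 1) * b + (q - 1) * y * a) * ((p - 1) * d + (q + 1) * y * c)
      = (p\<^sup>2 - 1) * (c\<^sup>2 - b * d) + (q\<^sup>2 - 1) * y\<^sup>2 * (b\<^sup>2 - a * c)
        + (p - 1) * (q - 1) * y * (b * c - a * d) + (c - y * b)\<^sup>2"
    by (simp add: power2_eq_square algebra_simps)
  moreover have "1 \<le> p\<^sup>2" "1 \<le> q\<^sup>2" using assms(6,7) by (simp_all add: one_le_power)
  ultimately show ?thesis
    using assms by (smt (verit) mult_nonneg_nonneg zero_le_power2)
qed

theorem S_newton: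
  assumes X: "\<And>i. X i > 0"
  shows "S X n k * S X n (k + 2) \<le> (S X n (k + 1))\<^sup>2"
proof (induction n arbitrary: k)
  case 0
  then show ?case by (simp add: S_eq_0)
next
  case (Suc n)
  show ?case
  proof (cases "k < n")
    case False
    then show ?thesis by (simp add: S_eq_0)
  next
    case True
    have X0: "\<And>i. 0 \<le> X i" using X less_imp_le by blast
    \<comment> \<open>at k = 0 the coefficient q - 1 of a vanishes; a = 0 (not S X n (k - 1) = S X n 0) keeps a * c \<le> b^2\<close>
    define a where "a = (if k = 0 then 0 else S X n (k - 1))"
    define b c d where "b = S X n k" and "c = S X n (k + 1)" and "d = S X n (k + 2)"
    define y p q where "y = X n" and "p = real n - real k" and "q = real k + 1"
    have N0: "(real n + 1) * S X (Suc n) k = (p + 1) * b + (q - 1) * y * a"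
      unfolding S_Suc by (simp add: a_def b_def y_def p_def q_def)
    have N1: "(real n + 1) * S X (Suc n) (k + 1) = p * c + q * y * b"
      unfolding S_Suc by (simp add: b_def c_def y_def p_def q_def)
    have N2: "(real n + 1) * S X (Suc n) (k + 2) = (p - 1) * d + (q + 1) * y * c"
      unfolding S_Suc by (simp add: c_def d_def y_def p_def q_def)
    have "a * c \<le> b\<^sup>2"
      using Suc.IH[of "k - 1"] by (cases "k = 0") (simp_all add: a_def b_def c_def)
    moreover have "b * d \<le> c\<^sup>2" using Suc.IH[of k] by (simp add: b_def c_def d_def)
    moreover have "0 \<le> a" "0 \<le> b" "0 \<le> c" "0 \<le> d" "0 \<le> y"
      using S_nonneg[OF X0] X0 by (simp_all add: a_def b_def c_def d_def y_def)
    moreover have "0 < b * c" using S_pos[OF X] True by (simp add: b_def c_def)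
    moreover have "1 \<le> p" "1 \<le> q" using True by (simp_all add: p_def q_def)
    ultimately have "((real n + 1) * S X (Suc n) k) * ((real n + 1) * S X (Suc n) (k + 2))
        \<le> ((real n + 1) * S X (Suc n) (k + 1))\<^sup>2"
      unfolding N0 N1 N2 by (intro newton_step_inequality)
    then have "(real n + 1)\<^sup>2 * (S X (Suc n) k * S X (Suc n) (k + 2))
        \<le> (real n + 1)\<^sup>2 * (S X (Suc n) (k + 1))\<^sup>2"
      by (simp add: power2_eq_square mult_ac)
    then show ?thesis by (rule mult_left_le_imp_le) simp
  qed
qed


lemma S_ratio_antimono:
  assumes X: "\<And>i. X i > 0" and "j \<le> i" "i < n"
  shows "S X n (Suc i) / S X n i \<le> S X n (Suc j) / S X n j"
  using assms(2,3)
proof (induction i rule: dec_induct)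
  case (step i)
  have "S X n i > 0" "S X n (Suc i) > 0" using S_pos[OF X] step.prems by simp_all
  moreover have "S X n i * S X n (Suc (Suc i)) \<le> (S X n (Suc i))\<^sup>2"
    using S_newton[OF X, where n=n and k=i] by (simp add: numeral_2_eq_2)
  ultimately have "S X n (Suc (Suc i)) / S X n (Suc i) \<le> S X n (Suc i) / S X n i"
    by (simp add: divide_simps power2_eq_square mult.commute)
  with step show ?case by simp
qed simp

lemma power_le_S_if_le_ratios:
  assumes X: "\<And>i. X i > 0" and "m \<le> n" "0 \<le> r" "\<And>j. j < m \<Longrightarrow> r \<le> S X n (Suc j) / S X n j"
  shows "r ^ m \<le> S X n m"
  using assms(2,4)
proof (induction m)
  case (Suc m)
  have "S X n m > 0" using S_pos[OF X] Suc.prems by simp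
  have "r ^ m * r \<le> S X n m * (S X n (Suc m) / S X n m)"
    using Suc \<open>0 \<le> r\<close> \<open>S X n m > 0\<close> by (intro mult_mono) auto
  with \<open>S X n m > 0\<close> show ?case by (simp add: mult.commute)
qed simp

lemma S_Suc_power_le:
  assumes X: "\<And>i. X i > 0"
  shows "S X n (Suc m) ^ m \<le> S X n m ^ Suc m"
proof (cases "m < n")
  case True
  define r where "r = S X n (Suc m) / S X n m"
  have "S X n m > 0" "S X n (Suc m) > 0" using S_pos[OF X] True by simp_all
  then have "r \<ge> 0" by (simp add: r_def)
  have "r ^ m \<le> S X n m"
    using power_le_S_if_le_ratios[OF X, of m n r] S_ratio_antimono[OF X, of _ m n] True \<open>r \<ge> 0\<close>
    by (simp add: r_def)
  have "S X n (Suc m) ^ m = S X n m ^ m * r ^ m"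
    using \<open>S X n m > 0\<close> by (simp add: r_def power_mult_distrib[symmetric])
  also have "\<dots> \<le> S X n m ^ m * S X n m"
    using \<open>r ^ m \<le> S X n m\<close> \<open>S X n m > 0\<close> by (intro mult_left_mono) auto
  finally show ?thesis by (simp add: mult.commute)
next
  case False
  have "0 \<le> S X n m" using S_nonneg[of X] X less_imp_le by blast
  with False show ?thesis by (cases m) (simp_all add: S_eq_0)
qed

lemma real_root_le_root_if_power_le:
  fixes x y :: real
  assumes "0 < m" "0 < n" "0 \<le> x" "0 \<le> y" "x ^ m \<le> y ^ n"
  shows "root n x \<le> root m y"
proof -
  have "root (n * m) (x ^ m) \<le> root (m * n) (y ^ n)"
    using assms by (simp add: mult.commute)
  then show ?thesis
    using assms by (simp only: real_root_mult_exp real_root_power_cancel)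
qed

theorem S_root_antimono:
  assumes X: "\<And>i. X i > 0" and "1 \<le> m" "m \<le> m'"
  shows "root m' (S X n m') \<le> root m (S X n m)"
  using assms(3)
proof (induction m' rule: dec_induct)
  case (step i)
  have "0 \<le> S X n i" "0 \<le> S X n (Suc i)" using S_nonneg[of X] X less_imp_le by blast+
  then have "root (Suc i) (S X n (Suc i)) \<le> root i (S X n i)"
    using S_Suc_power_le[OF X, where n=n and m=i] step \<open>1 \<le> m\<close> by (intro real_root_le_root_if_power_le) auto
  with step show ?case by simp
qed simp

section \<open>Uniform convergence of monotone functions\<close>

lemma grid_bracket:
  fixes t :: "nat \<Rightarrow> real"
  assumes "t 0 \<le> c" "c \<le> t N" "0 < N"
  obtains i where "i < N" "t i \<le> c" "c \<le> t (Suc i)"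
proof -
  define i where "i = Max {i. i < N \<and> t i \<le> c}"
  have fin: "finite {i. i < N \<and> t i \<le> c}" by simp
  have "0 \<in> {i. i < N \<and> t i \<le> c}" using assms by simp
  then have i: "i < N" "t i \<le> c"
    using Max_in[OF fin] unfolding i_def by blast+
  have "c \<le> t (Suc i)"
  proof (cases "Suc i = N")
    case False
    then have "Suc i \<notin> {i. i < N \<and> t i \<le> c}"
      using Max_ge[OF fin, of "Suc i"] unfolding i_def by fastforce
    with i False show ?thesis by simp
  qed (use assms in simp)
  with i that show ?thesis by blast
qed

lemma uniform_limit_antimono_on_interval:
  fixes f :: "nat \<Rightarrow> real \<Rightarrow> real" and g :: "real \<Rightarrow> real"
  assumes mono: "\<And>k. antimono_on {a..b} (f k)"
    and lim: "\<And>c. c \<in> {a..b} \<Longrightarrow> (\<lambda>k. f k c) \<longlonglongrightarrow> g c"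
    and cont: "continuous_on {a..b} g"
  shows "uniform_limit {a..b} f g sequentially"
proof (cases "a \<le> b")
  case True
  show ?thesis
  proof (rule uniform_limitI)
    fix e :: real assume "e > 0"
    obtain d where "d > 0"
      and d: "\<And>x y. x \<in> {a..b} \<Longrightarrow> y \<in> {a..b} \<Longrightarrow> dist y x < d \<Longrightarrow> dist (g y) (g x) < e / 2"
      using compact_uniformly_continuous[OF cont compact_Icc] \<open>e > 0\<close>
      unfolding uniformly_continuous_on_def by (metis half_gt_zero)
    obtain N :: nat where "(b - a) / d < N" using reals_Archimedean2 by blast
    then have "b - a < real N * d" using \<open>d > 0\<close> by (simp add: field_simps)
    moreover have "0 < N"
      using calculation True by (cases "N = 0") auto
    ultimately have "(b - a) / N < d" by (simp add: pos_divide_less_eq mult.commute)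
    define t where "t i = a + (b - a) * real i / real N" for i
    have t: "t i \<in> {a..b}" if "i \<le> N" for i
    proof -
      have "0 \<le> (b - a) * real i / N" "(b - a) * real i / N \<le> b - a"
        using that True \<open>0 < N\<close> by (simp_all add: divide_le_eq mult_left_mono)
      then show ?thesis by (simp add: t_def)
    qed
    have step: "t (Suc i) - t i = (b - a) / N" for i
      by (simp add: t_def add_divide_distrib[symmetric] algebra_simps)
    have "\<forall>\<^sub>F k in sequentially. \<forall>i\<in>{..N}. dist (f k (t i)) (g (t i)) < e / 2"
      using \<open>e > 0\<close> by (intro eventually_ball_finite ballI tendstoD[OF lim] t) auto
    then show "\<forall>\<^sub>F k in sequentially. \<forall>c\<in>{a..b}. dist (f k c) (g c) < e"
    proof eventually_elim
      case (elim k)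
      show ?case
      proof
        fix c assume c: "c \<in> {a..b}"
        have "t 0 \<le> c" "c \<le> t N" using c \<open>0 < N\<close> by (simp_all add: t_def)
        then obtain i where i: "i < N" "t i \<le> c" "c \<le> t (Suc i)"
          using grid_bracket \<open>0 < N\<close> by blast
        have ti: "t i \<in> {a..b}" "t (Suc i) \<in> {a..b}" using t i by simp_all
        have "dist c (t i) < d" "dist c (t (Suc i)) < d"
          using i step[of i] \<open>(b - a) / N < d\<close> by (simp_all add: dist_real_def)
        then have "dist (g c) (g (t i)) < e / 2" "dist (g c) (g (t (Suc i))) < e / 2"
          using d ti c by blast+
        moreover have "dist (f k (t i)) (g (t i)) < e / 2" "dist (f k (t (Suc i))) (g (t (Suc i))) < e / 2"
          using elim i by simp_all
        moreover have "f k (t (Suc i)) \<le> f k c" "f k c \<le> f k (t i)"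
          using monotone_onD[OF mono] ti c i by blast+
        ultimately show "dist (f k c) (g c) < e"
          unfolding dist_real_def by linarith
      qed
    qed
  qed
qed (simp add: uniform_limit_iff)

section \<open>Monotonicity of F in c\<close>

lemma periodic_add_mult:
  fixes X :: "nat \<Rightarrow> 'a" and m :: nat
  assumes "\<And>i. X (i + L) = X i"
  shows "X (i + m * L) = X i"
  using assms by (induction m arbitrary: i) (simp_all add: add.assoc[symmetric])

lemma sum_periodic:
  fixes X :: "nat \<Rightarrow> 'a::semiring_1"
  assumes "\<And>i. X (i + L) = X i"
  shows "(\<Sum>i<k * L. X i) = of_nat k * (\<Sum>i<L. X i)"
proof -
  have "(\<Sum>i\<in>{m * L..<m * L + L}. X i) = (\<Sum>i<L. X i)" for m
    using sum.shift_bounds_nat_ivl[of X 0 "m * L" L] periodic_add_mult[where X = X, OF assms]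
    by (simp add: atLeast0LessThan add.commute)
  then show ?thesis by (simp flip: sum.nat_group)
qed

lemma F_0_eq_S_1:
  assumes "\<And>i. X (i + L) = X i" "0 < k"
  shows "F X L k 0 = S X (k * L) 1"
  unfolding F_def S_1 using assms by (simp add: sum_periodic)

lemma F_nonneg: "(\<And>i. 0 \<le> X i) \<Longrightarrow> 0 \<le> F X L k c"
  by (simp add: F_def Let_def sum_nonneg S_nonneg real_root_ge_zero)

theorem F_antimono_on:
  assumes X: "\<And>i. X i > 0" and per: "\<And>i. X (i + L) = X i"
  shows "antimono_on {0..} (F X L k)"
proof (rule monotone_onI)
  fix c c' :: real assume "c \<in> {0..}" "c' \<in> {0..}" "c \<le> c'"
  define n m where "n = k * L" and "m t = nat \<lceil>t * real n\<rceil>" for t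
  have F_pos: "F X L k t = root (m t) (S X n (m t))" if "t > 0" for t
    using that by (simp add: F_def Let_def m_def n_def)
  show "F X L k c' \<le> F X L k c"
  proof (cases "c' = 0 \<or> m c' = 0")
    case True
    have "0 \<le> F X L k c" using F_nonneg[of X] X less_imp_le by blast
    moreover have "c' = 0 \<Longrightarrow> c = 0" using \<open>c \<in> {0..}\<close> \<open>c \<le> c'\<close> by simp
    moreover have "c' \<noteq> 0 \<Longrightarrow> F X L k c' = 0" using True F_pos \<open>c' \<in> {0..}\<close> by simp
    ultimately show ?thesis by (cases "c' = 0") auto
  next
    case False
    then have "c' > 0" "1 \<le> m c'" using \<open>c' \<in> {0..}\<close> by auto
    then have "0 < n" by (cases "n = 0") (simp_all add: m_def)
    obtain j where "1 \<le> j" "j \<le> m c'" "F X L k c = root j (S X n j)"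
    proof (cases "c = 0")
      case True
      then show ?thesis
        using that[of 1] \<open>1 \<le> m c'\<close> \<open>0 < n\<close> F_0_eq_S_1[where X = X, OF per] by (simp add: n_def)
    next
      case False
      then have "c > 0" using \<open>c \<in> {0..}\<close> by simp
      have "0 < c * real n" using \<open>c > 0\<close> \<open>0 < n\<close> by simp
      then have "1 \<le> m c" unfolding m_def by linarith
      moreover have "m c \<le> m c'"
        unfolding m_def using \<open>c \<le> c'\<close> by (intro nat_mono ceiling_mono mult_right_mono) auto
      ultimately show ?thesis using that F_pos[OF \<open>c > 0\<close>] by blast
    qed
    then show ?thesis using F_pos[OF \<open>c' > 0\<close>] S_root_antimono[OF X] by simp
  qed
qed

theorem proposition4p3:
  fixes X :: "nat \<Rightarrow> real" and L :: nat and FX :: "real \<Rightarrow> real"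
  assumes "L \<ge> 1"
    and "\<And>i. X i > 0"
    and "\<And>i. X (i + L) = X i"
    and "\<And>c. c \<in> {0..1} \<Longrightarrow> (\<lambda>k. F X L k c) \<longlonglongrightarrow> FX c"
    and "continuous_on {0..1} FX"
  shows "uniform_limit {0..1} (\<lambda>k c. F X L k c) FX sequentially"
proof (rule uniform_limit_antimono_on_interval)
  show "antimono_on {0..1} (F X L k)" for k
    using F_antimono_on[where X = X, OF assms(2,3)] by (rule monotone_on_subset) auto
qed (use assms(4,5) in auto)

end
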